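(* Let $\tau$ be a signature, $\mathcal F$ an ultrafilter on $I$, $\mathcal G$ an ultrafilter on $J$, $\{\mathcal A_{i,j}:i\in I,j\in J\}$ a family of $\tau$-structures, and $\phi\in SO(\tau)$. For $j\in J$ let $(\mathcal A_j,\Upsilon_j)$ be the decomposable-Henkin model formed from $\{\mathcal A_{i,j}:i\in I\}$ by $\mathcal F$, and let $(\mathcal A,\Upsilon)$ be the decomposable-Henkin model formed from $\{\mathcal A_{i,j}:(i,j)\in I\times J\}$ by $\mathcal F\times\mathcal G$. Then $\{j\in J:(\mathcal A_j,\Upsilon_j)\models_\epsilon\phi\}\in\mathcal G$ if and only if $(\mathcal A,\Upsilon)\models_\epsilon\phi$.
   Context: $SO(\tau)$: second-order $\tau$-formulas with relation variables only. For ultrafilters $\mathcal F$ on $I$, $\mathcal G$ on $J$, the product $\mathcal F\times\mathcal G$ on $I\times J$ is given by $X\in\mathcal F\times\mathcal G$ iff $\{j:\{i:(i,j)\in X\}\in\mathcal F\}\in\mathcal G$. Given a family $\{\mathcal B_k:k\in L\}$ of $\tau$-structures and an ultrafilter $\mathcal H$ on $L$, with $\mathcal B=\prod_k\mathcal B_k/\mathcal H$, a relation $R\subseteq B^m$ ($m\geq1$) is decomposable if $R=\prod_k R_k/\mathcal H$ for some $R_k\subseteq B_k^m$; the decomposable-Henkin model formed from the family by $\mathcal H$ is the pair $(\mathcal B,\Upsilon)$ where $\Upsilon$ is the set of all decomposable relations. Henkin semantics $\models_\epsilon$: formulas are evaluated in $(\mathcal B,\Upsilon)$ under assignments sending each $m$-ary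 relation variable to an $m$-ary relation in $\Upsilon$ (and first-order variables to elements of $B$); first-order parts are evaluated in the expansion of $\mathcal B$ by the assigned relations as usual, and second-order quantifiers $\exists R$, $\forall R$ range only over the relations in $\Upsilon$ of the appropriate arity. $(\mathcal B,\Upsilon)\models_\epsilon\phi$ means $\phi$ holds under all assignments. *)

theory Defs
  imports Main
begin

definition is_ultrafilter :: "'i set set \<Rightarrow> bool" where
  "is_ultrafilter U \<longleftrightarrow>
     UNIV \<in> U \<and> {} \<notin> U \<and>
     (\<forall>X Y. X \<in> U \<and> X \<subseteq> Y \<longrightarrow> Y \<in> U) \<and>
     (\<forall>X Y. X \<in> U \<and> Y \<in> U \<longrightarrow> X \<inter> Y \<in> U) \<and>
     (\<forall>X. X \<in> U \<or> - X \<in> U)"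

definition prod_uf :: "'i set set \<Rightarrow> 'j set set \<Rightarrow> ('i \<times> 'j) set set" where
  "prod_uf F G = {X. {j. {i. (i, j) \<in> X} \<in> F} \<in> G}"

text \<open>A signature tau is given by a type of relation symbols 'r with arity function
  rar and a type of function symbols 'f with arity function far (constants = 0-ary).\<close>

record ('r, 'f, 'a) struct =
  sdom :: "'a set"
  srel :: "'r \<Rightarrow> 'a list \<Rightarrow> bool"
  sfn  :: "'f \<Rightarrow> 'a list \<Rightarrow> 'a"

definition is_structure :: "('f \<Rightarrow> nat) \<Rightarrow> ('r, 'f, 'a) struct \<Rightarrow> bool" where
  "is_structure far A \<longleftrightarrow> sdom A \<noteq> {} \<and>
     (\<forall>f xs. length xs = far f \<and> set xs \<subseteq> sdom A \<longrightarrow> sfn A f xs \<in> sdom A)"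

definition ucls :: "'k set set \<Rightarrow> ('k \<Rightarrow> ('r, 'f, 'a) struct) \<Rightarrow> ('k \<Rightarrow> 'a) \<Rightarrow> ('k \<Rightarrow> 'a) set" where
  "ucls H Bs f = {g. (\<forall>k. g k \<in> sdom (Bs k)) \<and> {k. f k = g k} \<in> H}"

definition is_rep :: "'k set set \<Rightarrow> ('k \<Rightarrow> ('r, 'f, 'a) struct) \<Rightarrow> ('k \<Rightarrow> 'a) \<Rightarrow> ('k \<Rightarrow> 'a) set \<Rightarrow> bool" where
  "is_rep H Bs g x \<longleftrightarrow> (\<forall>k. g k \<in> sdom (Bs k)) \<and> x = ucls H Bs g"

definition reps :: "'k set set \<Rightarrow> ('k \<Rightarrow> ('r, 'f, 'a) struct) \<Rightarrow> ('k \<Rightarrow> 'a) list \<Rightarrow> ('k \<Rightarrow> 'a) set list \<Rightarrow> bool" where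
  "reps H Bs fs xs \<longleftrightarrow> length fs = length xs \<and> (\<forall>l < length fs. is_rep H Bs (fs ! l) (xs ! l))"

definition uprod :: "'k set set \<Rightarrow> ('k \<Rightarrow> ('r, 'f, 'a) struct) \<Rightarrow> ('r, 'f, ('k \<Rightarrow> 'a) set) struct" where
  "uprod H Bs =
    \<lparr> sdom = {ucls H Bs f | f. \<forall>k. f k \<in> sdom (Bs k)},
      srel = (\<lambda>r xs. \<exists>fs. reps H Bs fs xs \<and> {k. srel (Bs k) r (map (\<lambda>g. g k) fs)} \<in> H),
      sfn = (\<lambda>f xs. ucls H Bs (\<lambda>k. sfn (Bs k) f (map (\<lambda>x. (SOME g. is_rep H Bs g x) k) xs))) \<rparr>"

definition urel :: "'k set set \<Rightarrow> ('k \<Rightarrow> ('r, 'f, 'a) struct) \<Rightarrow> ('k \<Rightarrow> 'a list set) \<Rightarrow> ('k \<Rightarrow> 'a) set list set" where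
  "urel H Bs Rk = {xs. \<exists>fs. reps H Bs fs xs \<and> {k. map (\<lambda>g. g k) fs \<in> Rk k} \<in> H}"

definition mrels :: "'b set \<Rightarrow> nat \<Rightarrow> 'b list set" where
  "mrels B m = {xs. length xs = m \<and> set xs \<subseteq> B}"

definition decomposable :: "'k set set \<Rightarrow> ('k \<Rightarrow> ('r, 'f, 'a) struct) \<Rightarrow> nat \<Rightarrow> ('k \<Rightarrow> 'a) set list set \<Rightarrow> bool" where
  "decomposable H Bs m R \<longleftrightarrow> R \<subseteq> mrels (sdom (uprod H Bs)) m \<and>
     (\<exists>Rk. (\<forall>k. Rk k \<subseteq> mrels (sdom (Bs k)) m) \<and> R = urel H Bs Rk)"

definition henkin_rels :: "'k set set \<Rightarrow> ('k \<Rightarrow> ('r, 'f, 'a) struct) \<Rightarrow> ('k \<Rightarrow> 'a) set list set set" where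
  "henkin_rels H Bs = {R. \<exists>m \<ge> 1. decomposable H Bs m R}"

datatype 'f trm = Var nat | Fn 'f "'f trm list"

text \<open>Relation variables are pairs (name, arity); RApp X m ts applies the m-ary
  relation variable X to the terms ts.\<close>
datatype ('r, 'f) sof =
    Eq "'f trm" "'f trm"
  | Rel 'r "'f trm list"
  | RApp nat nat "'f trm list"
  | Neg "('r, 'f) sof"
  | Conj "('r, 'f) sof" "('r, 'f) sof"
  | Disj "('r, 'f) sof" "('r, 'f) sof"
  | Impl "('r, 'f) sof" "('r, 'f) sof"
  | Ex nat "('r, 'f) sof"
  | All nat "('r, 'f) sof"
  | ExR nat nat "('r, 'f) sof"
  | AllR nat nat "('r, 'f) sof"

fun wf_trm :: "('f \<Rightarrow> nat) \<Rightarrow> 'f trm \<Rightarrow> bool" where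
  "wf_trm far (Var x) = True"
| "wf_trm far (Fn f ts) = (length ts = far f \<and> (\<forall>t \<in> set ts. wf_trm far t))"

fun wf_so :: "('r \<Rightarrow> nat) \<Rightarrow> ('f \<Rightarrow> nat) \<Rightarrow> ('r, 'f) sof \<Rightarrow> bool" where
  "wf_so rar far (Eq t u) = (wf_trm far t \<and> wf_trm far u)"
| "wf_so rar far (Rel r ts) = (length ts = rar r \<and> (\<forall>t \<in> set ts. wf_trm far t))"
| "wf_so rar far (RApp X m ts) = (m \<ge> 1 \<and> length ts = m \<and> (\<forall>t \<in> set ts. wf_trm far t))"
| "wf_so rar far (Neg p) = wf_so rar far p"
| "wf_so rar far (Conj p q) = (wf_so rar far p \<and> wf_so rar far q)"
| "wf_so rar far (Disj p q) = (wf_so rar far p \<and> wf_so rar far q)"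
| "wf_so rar far (Impl p q) = (wf_so rar far p \<and> wf_so rar far q)"
| "wf_so rar far (Ex x p) = wf_so rar far p"
| "wf_so rar far (All x p) = wf_so rar far p"
| "wf_so rar far (ExR X m p) = (m \<ge> 1 \<and> wf_so rar far p)"
| "wf_so rar far (AllR X m p) = (m \<ge> 1 \<and> wf_so rar far p)"

fun tval :: "('r, 'f, 'b) struct \<Rightarrow> (nat \<Rightarrow> 'b) \<Rightarrow> 'f trm \<Rightarrow> 'b" where
  "tval B s (Var x) = s x"
| "tval B s (Fn f ts) = sfn B f (map (tval B s) ts)"

text \<open>Henkin semantics in (B, Ups): s1 assigns first-order variables, s2 X m is the
  relation assigned to the m-ary relation variable X.\<close>
fun hsat :: "('r, 'f, 'b) struct \<Rightarrow> 'b list set set \<Rightarrow> (nat \<Rightarrow> 'b) \<Rightarrow> (nat \<Rightarrow> nat \<Rightarrow> 'b list set)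
    \<Rightarrow> ('r, 'f) sof \<Rightarrow> bool" where
  "hsat B Ups s1 s2 (Eq t u) = (tval B s1 t = tval B s1 u)"
| "hsat B Ups s1 s2 (Rel r ts) = srel B r (map (tval B s1) ts)"
| "hsat B Ups s1 s2 (RApp X m ts) = (map (tval B s1) ts \<in> s2 X m)"
| "hsat B Ups s1 s2 (Neg p) = (\<not> hsat B Ups s1 s2 p)"
| "hsat B Ups s1 s2 (Conj p q) = (hsat B Ups s1 s2 p \<and> hsat B Ups s1 s2 q)"
| "hsat B Ups s1 s2 (Disj p q) = (hsat B Ups s1 s2 p \<or> hsat B Ups s1 s2 q)"
| "hsat B Ups s1 s2 (Impl p q) = (hsat B Ups s1 s2 p \<longrightarrow> hsat B Ups s1 s2 q)"
| "hsat B Ups s1 s2 (Ex x p) = (\<exists>a \<in> sdom B. hsat B Ups (s1(x := a)) s2 p)"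
| "hsat B Ups s1 s2 (All x p) = (\<forall>a \<in> sdom B. hsat B Ups (s1(x := a)) s2 p)"
| "hsat B Ups s1 s2 (ExR X m p) =
     (\<exists>R \<in> Ups. R \<subseteq> mrels (sdom B) m \<and> hsat B Ups s1 (s2(X := (s2 X)(m := R))) p)"
| "hsat B Ups s1 s2 (AllR X m p) =
     (\<forall>R \<in> Ups. R \<subseteq> mrels (sdom B) m \<longrightarrow> hsat B Ups s1 (s2(X := (s2 X)(m := R))) p)"

definition hmodels :: "('r, 'f, 'b) struct \<Rightarrow> 'b list set set \<Rightarrow> ('r, 'f) sof \<Rightarrow> bool" where
  "hmodels B Ups p \<longleftrightarrow>
     (\<forall>s1 s2. (\<forall>x. s1 x \<in> sdom B) \<longrightarrow>
        (\<forall>X m. m \<ge> 1 \<longrightarrow> s2 X m \<in> Ups \<and> s2 X m \<subseteq> mrels (sdom B) m) \<longrightarrow>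
        hsat B Ups s1 s2 p)"

end

theory Submission
  imports Defs "HOL-Library.FuncSet"
begin

text \<open>
  Both sides are evaluated with Los's theorem for decomposable-Henkin ultraproducts: the model
  formed from the factors B_k by H satisfies phi iff for every family of full second-order
  assignments into the factors, H-many factors satisfy phi under theirs. The induction goes
  through second-order quantifiers because the decomposable relations of a given arity are
  exactly the ultraproducts of arbitrary factor relations of that arity.

  For F \<times> G the set of satisfying factors is large iff G-many columns j have F-many satisfying
  rows. A family of assignments over I \<times> J is the same as a J-indexed choice of families over I,
  and over an ultrafilter "G-many j satisfy a condition for all choices at j" is equivalent to
  "for every choice function, G-many j satisfy it" (choose counterexamples where they exist).
\<close>

section \<open>Ultrafilters\<close>

lemma ultrafilter_UNIV: "is_ultrafilter H \<Longrightarrow> UNIV \<in> H"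
  by (simp add: is_ultrafilter_def)

lemma ultrafilter_empty: "is_ultrafilter H \<Longrightarrow> {} \<notin> H"
  by (simp add: is_ultrafilter_def)

lemma ultrafilter_mono: "is_ultrafilter H \<Longrightarrow> X \<in> H \<Longrightarrow> X \<subseteq> Y \<Longrightarrow> Y \<in> H"
  unfolding is_ultrafilter_def by blast

lemma ultrafilter_Int_iff: "is_ultrafilter H \<Longrightarrow> X \<inter> Y \<in> H \<longleftrightarrow> X \<in> H \<and> Y \<in> H"
  unfolding is_ultrafilter_def by blast

lemma ultrafilter_Compl_iff:
  assumes "is_ultrafilter H"
  shows "- X \<in> H \<longleftrightarrow> X \<notin> H"
  using assms ultrafilter_Int_iff[OF assms, of X "- X"] ultrafilter_empty[OF assms]
  unfolding is_ultrafilter_def by auto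

lemma ultrafilter_Un_iff:
  assumes "is_ultrafilter H"
  shows "X \<union> Y \<in> H \<longleftrightarrow> X \<in> H \<or> Y \<in> H"
  using ultrafilter_Int_iff[OF assms, of "- X" "- Y"] ultrafilter_Compl_iff[OF assms]
  by (metis compl_sup)

lemma ultrafilter_nonempty: "is_ultrafilter H \<Longrightarrow> X \<in> H \<Longrightarrow> X \<noteq> {}"
  using ultrafilter_empty by blast

lemma ultrafilter_Collect_cong:
  assumes "is_ultrafilter H" and "S \<in> H" and "\<And>k. k \<in> S \<Longrightarrow> P k \<longleftrightarrow> Q k"
  shows "{k. P k} \<in> H \<longleftrightarrow> {k. Q k} \<in> H"
proof -
  have "S \<inter> {k. P k} = S \<inter> {k. Q k}"
    using assms(3) by blast
  then show ?thesis
    using ultrafilter_Int_iff[OF assms(1)] assms(2) by metis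
qed

lemma ultrafilter_Collect_Ball_finite:
  assumes "is_ultrafilter H" and "finite A" and "\<And>a. a \<in> A \<Longrightarrow> {k. P a k} \<in> H"
  shows "{k. \<forall>a\<in>A. P a k} \<in> H"
  using assms(2,3)
proof (induction A rule: finite_induct)
  case empty
  then show ?case by (simp add: ultrafilter_UNIV[OF assms(1)])
next
  case (insert a A)
  have "{k. \<forall>b\<in>insert a A. P b k} = {k. P a k} \<inter> {k. \<forall>b\<in>A. P b k}"
    by auto
  with insert show ?case
    by (simp add: ultrafilter_Int_iff[OF assms(1)])
qed

lemma ultrafilter_Collect_Bex_iff:
  assumes "is_ultrafilter H" and "\<And>k. D k \<noteq> {}"
  shows "{k. \<exists>b\<in>D k. P k b} \<in> H \<longleftrightarrow> (\<exists>g\<in>Pi UNIV D. {k. P k (g k)} \<in> H)"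
proof
  assume Bex: "{k. \<exists>b\<in>D k. P k b} \<in> H"
  have "\<forall>k. \<exists>b. b \<in> D k \<and> ((\<exists>b\<in>D k. P k b) \<longrightarrow> P k b)"
    using assms(2) by blast
  then obtain g where g: "\<And>k. g k \<in> D k \<and> ((\<exists>b\<in>D k. P k b) \<longrightarrow> P k (g k))"
    by metis
  have "{k. P k (g k)} \<in> H"
    using g by (intro ultrafilter_mono[OF assms(1) Bex]) blast
  moreover have "g \<in> Pi UNIV D"
    using g by blast
  ultimately show "\<exists>g\<in>Pi UNIV D. {k. P k (g k)} \<in> H"
    by blast
next
  assume "\<exists>g\<in>Pi UNIV D. {k. P k (g k)} \<in> H"
  then obtain g where g: "g \<in> Pi UNIV D" and large: "{k. P k (g k)} \<in> H"
    by blast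
  show "{k. \<exists>b\<in>D k. P k b} \<in> H"
    using g by (intro ultrafilter_mono[OF assms(1) large]) blast
qed

lemma ultrafilter_Collect_Ball_iff:
  assumes "is_ultrafilter H" and "\<And>k. D k \<noteq> {}"
  shows "{k. \<forall>b\<in>D k. P k b} \<in> H \<longleftrightarrow> (\<forall>g\<in>Pi UNIV D. {k. P k (g k)} \<in> H)"
proof -
  have "{k. \<forall>b\<in>D k. P k b} = - {k. \<exists>b\<in>D k. \<not> P k b}"
    by auto
  moreover have "\<And>g. {k. P k (g k)} = - {k. \<not> P k (g k)}"
    by auto
  ultimately show ?thesis
    using ultrafilter_Collect_Bex_iff[OF assms, where P="\<lambda>k b. \<not> P k b"]
    by (simp add: ultrafilter_Compl_iff[OF assms(1)])
qed

lemma ultrafilter_Bex_image_Pi_iff: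
  assumes "is_ultrafilter H" and "\<And>k. D k \<noteq> {}"
    and "\<And>g. g \<in> Pi UNIV D \<Longrightarrow> P (\<Phi> g) \<longleftrightarrow> {k. Q k (g k)} \<in> H"
  shows "(\<exists>e\<in>\<Phi> ` Pi UNIV D. P e) \<longleftrightarrow> {k. \<exists>b\<in>D k. Q k b} \<in> H"
  using assms(3) by (auto simp: ultrafilter_Collect_Bex_iff[OF assms(1,2)])

lemma ultrafilter_Ball_image_Pi_iff:
  assumes "is_ultrafilter H" and "\<And>k. D k \<noteq> {}"
    and "\<And>g. g \<in> Pi UNIV D \<Longrightarrow> P (\<Phi> g) \<longleftrightarrow> {k. Q k (g k)} \<in> H"
  shows "(\<forall>e\<in>\<Phi> ` Pi UNIV D. P e) \<longleftrightarrow> {k. \<forall>b\<in>D k. Q k b} \<in> H"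
  using assms(3) by (auto simp: ultrafilter_Collect_Ball_iff[OF assms(1,2)])
section \<open>Ultraproducts\<close>

lemma ucls_cong:
  assumes "is_ultrafilter H" and "{k. f k = g k} \<in> H"
  shows "ucls H Bs f = ucls H Bs g"
proof -
  have "{k. f k = h k} \<in> H \<longleftrightarrow> {k. g k = h k} \<in> H" for h
    by (rule ultrafilter_Collect_cong[OF assms]) simp
  then show ?thesis
    by (auto simp: ucls_def)
qed

lemma ucls_eq_iff:
  assumes "is_ultrafilter H" and "g \<in> Pi UNIV (\<lambda>k. sdom (Bs k))"
  shows "ucls H Bs f = ucls H Bs g \<longleftrightarrow> {k. f k = g k} \<in> H"
proof
  assume "ucls H Bs f = ucls H Bs g"
  moreover have "g \<in> ucls H Bs g"
    using assms(2) by (simp add: ucls_def Pi_iff ultrafilter_UNIV[OF assms(1)])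
  ultimately have "g \<in> ucls H Bs f"
    by simp
  then show "{k. f k = g k} \<in> H"
    by (simp add: ucls_def)
qed (rule ucls_cong[OF assms(1)])

lemma sdom_uprod: "sdom (uprod H Bs) = ucls H Bs ` Pi UNIV (\<lambda>k. sdom (Bs k))"
  by (auto simp: uprod_def)

lemma is_rep_ucls_iff:
  "is_rep H Bs g (ucls H Bs f) \<longleftrightarrow> g \<in> Pi UNIV (\<lambda>k. sdom (Bs k)) \<and> ucls H Bs g = ucls H Bs f"
  by (auto simp: is_rep_def)

lemma reps_map_ucls:
  "set fs \<subseteq> Pi UNIV (\<lambda>k. sdom (Bs k)) \<Longrightarrow> reps H Bs fs (map (ucls H Bs) fs)"
  by (auto simp: reps_def is_rep_def dest: nth_mem)

lemma reps_map_ucls_agree: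
  assumes "is_ultrafilter H" and "set fs \<subseteq> Pi UNIV (\<lambda>k. sdom (Bs k))"
    and "reps H Bs gs (map (ucls H Bs) fs)"
  shows "{k. map (\<lambda>g. g k) gs = map (\<lambda>f. f k) fs} \<in> H"
proof -
  have len: "length gs = length fs"
    using assms(3) by (simp add: reps_def)
  have "{k. (gs ! l) k = (fs ! l) k} \<in> H" if "l < length fs" for l
  proof -
    have "is_rep H Bs (gs ! l) (ucls H Bs (fs ! l))"
      using assms(3) that by (auto simp: reps_def)
    moreover have "fs ! l \<in> Pi UNIV (\<lambda>k. sdom (Bs k))"
      using assms(2) that by (meson nth_mem subsetD)
    ultimately show ?thesis
      by (auto simp: is_rep_ucls_iff ucls_eq_iff[OF assms(1)])
  qed
  then have "{k. \<forall>l\<in>{..<length fs}. (gs ! l) k = (fs ! l) k} \<in> H"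
    by (intro ultrafilter_Collect_Ball_finite[OF assms(1)]) auto
  then show ?thesis
    by (rule ultrafilter_mono[OF assms(1)]) (auto simp: len intro: nth_equalityI)
qed

lemma map_ucls_in_urel_iff:
  assumes "is_ultrafilter H" and "set fs \<subseteq> Pi UNIV (\<lambda>k. sdom (Bs k))"
  shows "map (ucls H Bs) fs \<in> urel H Bs Rk \<longleftrightarrow> {k. map (\<lambda>f. f k) fs \<in> Rk k} \<in> H"
proof
  assume "map (ucls H Bs) fs \<in> urel H Bs Rk"
  then obtain gs where gs: "reps H Bs gs (map (ucls H Bs) fs)"
    and large: "{k. map (\<lambda>g. g k) gs \<in> Rk k} \<in> H"
    by (auto simp: urel_def)
  have "{k. map (\<lambda>g. g k) gs \<in> Rk k} \<in> H \<longleftrightarrow> {k. map (\<lambda>f. f k) fs \<in> Rk k} \<in> H"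
    by (rule ultrafilter_Collect_cong[OF assms(1) reps_map_ucls_agree[OF assms gs]]) simp
  with large show "{k. map (\<lambda>f. f k) fs \<in> Rk k} \<in> H"
    by blast
next
  assume "{k. map (\<lambda>f. f k) fs \<in> Rk k} \<in> H"
  moreover have "reps H Bs fs (map (ucls H Bs) fs)"
    using assms(2) by (rule reps_map_ucls)
  ultimately show "map (ucls H Bs) fs \<in> urel H Bs Rk"
    by (auto simp: urel_def)
qed

lemma srel_uprod_eq_urel:
  "srel (uprod H Bs) r xs \<longleftrightarrow> xs \<in> urel H Bs (\<lambda>k. Collect (srel (Bs k) r))"
  by (simp add: uprod_def urel_def)

lemma sfn_uprod:
  assumes "is_ultrafilter H" and "set fs \<subseteq> Pi UNIV (\<lambda>k. sdom (Bs k))"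
  shows "sfn (uprod H Bs) f (map (ucls H Bs) fs) = ucls H Bs (\<lambda>k. sfn (Bs k) f (map (\<lambda>g. g k) fs))"
proof -
  define gs where "gs = map (\<lambda>x. SOME g. is_rep H Bs g x) (map (ucls H Bs) fs)"
  have "is_rep H Bs (SOME g. is_rep H Bs g (ucls H Bs f')) (ucls H Bs f')" if "f' \<in> set fs" for f'
    by (rule someI[of _ f']) (use that assms(2) in \<open>auto simp: is_rep_def\<close>)
  then have "reps H Bs gs (map (ucls H Bs) fs)"
    by (auto simp: reps_def gs_def)
  then have "{k. map (\<lambda>g. g k) gs = map (\<lambda>f. f k) fs} \<in> H"
    by (rule reps_map_ucls_agree[OF assms])
  then have "{k. sfn (Bs k) f (map (\<lambda>g. g k) gs) = sfn (Bs k) f (map (\<lambda>g. g k) fs)} \<in> H"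
    by (rule ultrafilter_mono[OF assms(1)]) auto
  then have "ucls H Bs (\<lambda>k. sfn (Bs k) f (map (\<lambda>g. g k) gs)) = ucls H Bs (\<lambda>k. sfn (Bs k) f (map (\<lambda>g. g k) fs))"
    by (rule ucls_cong[OF assms(1)])
  then show ?thesis
    by (simp add: uprod_def gs_def o_def)
qed

lemma sdom_nonempty: "is_structure far B \<Longrightarrow> sdom B \<noteq> {}"
  by (simp add: is_structure_def)

lemma tval_in_sdom:
  assumes "is_structure far B" and "\<forall>x. s x \<in> sdom B"
  shows "wf_trm far t \<Longrightarrow> tval B s t \<in> sdom B"
proof (induction t)
  case (Fn f ts)
  then have "set (map (tval B s) ts) \<subseteq> sdom B"
    by auto
  with Fn.prems assms(1) show ?case
    by (simp add: is_structure_def)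
qed (use assms(2) in simp)

lemma tval_in_Pi:
  assumes "\<And>k. is_structure far (Bs k)" and "\<And>x. s x \<in> Pi UNIV (\<lambda>k. sdom (Bs k))"
    and "wf_trm far t"
  shows "(\<lambda>k. tval (Bs k) (\<lambda>x. s x k) t) \<in> Pi UNIV (\<lambda>k. sdom (Bs k))"
  using assms by (auto intro: tval_in_sdom)

lemma tval_uprod:
  assumes "is_ultrafilter H" and "\<And>k. is_structure far (Bs k)"
    and "\<And>x. s x \<in> Pi UNIV (\<lambda>k. sdom (Bs k))"
  shows "wf_trm far t \<Longrightarrow>
    tval (uprod H Bs) (\<lambda>x. ucls H Bs (s x)) t = ucls H Bs (\<lambda>k. tval (Bs k) (\<lambda>x. s x k) t)"
proof (induction t)
  case (Fn f ts)
  define h where "h t = (\<lambda>k. tval (Bs k) (\<lambda>x. s x k) t)" for t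
  have dom: "set (map h ts) \<subseteq> Pi UNIV (\<lambda>k. sdom (Bs k))"
    using Fn.prems by (simp add: image_subset_iff h_def tval_in_Pi[OF assms(2,3)])
  have "tval (uprod H Bs) (\<lambda>x. ucls H Bs (s x)) (Fn f ts) = sfn (uprod H Bs) f (map (ucls H Bs) (map h ts))"
    using Fn by (simp add: h_def o_def cong: map_cong)
  also have "\<dots> = ucls H Bs (\<lambda>k. sfn (Bs k) f (map (\<lambda>g. g k) (map h ts)))"
    by (rule sfn_uprod[OF assms(1) dom])
  finally show ?case
    by (simp add: h_def o_def)
qed simp

lemma map_tval_uprod_in_urel_iff:
  assumes "is_ultrafilter H" and "\<And>k. is_structure far (Bs k)"
    and "\<And>x. s x \<in> Pi UNIV (\<lambda>k. sdom (Bs k))" and "\<forall>t\<in>set ts. wf_trm far t"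
  shows "map (tval (uprod H Bs) (\<lambda>x. ucls H Bs (s x))) ts \<in> urel H Bs Rk \<longleftrightarrow>
    {k. map (tval (Bs k) (\<lambda>x. s x k)) ts \<in> Rk k} \<in> H"
proof -
  have map_eq: "map (tval (uprod H Bs) (\<lambda>x. ucls H Bs (s x))) ts
      = map (ucls H Bs) (map (\<lambda>t k. tval (Bs k) (\<lambda>x. s x k) t) ts)"
    using assms(4) by (simp add: tval_uprod[OF assms(1-3)] cong: map_cong)
  have dom: "set (map (\<lambda>t k. tval (Bs k) (\<lambda>x. s x k) t) ts) \<subseteq> Pi UNIV (\<lambda>k. sdom (Bs k))"
    using assms(4) by (simp add: image_subset_iff tval_in_Pi[OF assms(2,3)])
  show ?thesis
    by (simp only: map_eq map_ucls_in_urel_iff[OF assms(1) dom]) (simp add: o_def)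
qed

lemma urel_subset_mrels:
  assumes "is_ultrafilter H" and "Rk \<in> Pi UNIV (\<lambda>k. Pow (mrels (sdom (Bs k)) m))"
  shows "urel H Bs Rk \<subseteq> mrels (sdom (uprod H Bs)) m"
proof
  fix xs
  assume "xs \<in> urel H Bs Rk"
  then obtain fs where fs: "reps H Bs fs xs" and large: "{k. map (\<lambda>g. g k) fs \<in> Rk k} \<in> H"
    by (auto simp: urel_def)
  obtain k where "map (\<lambda>g. g k) fs \<in> Rk k"
    using ultrafilter_nonempty[OF assms(1) large] by blast
  then have "map (\<lambda>g. g k) fs \<in> mrels (sdom (Bs k)) m"
    using assms(2) by blast
  then have "length xs = m"
    using fs by (simp add: reps_def mrels_def)
  moreover have "set xs \<subseteq> sdom (uprod H Bs)"
    using fs by (auto simp: reps_def is_rep_def sdom_uprod in_set_conv_nth)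
  ultimately show "xs \<in> mrels (sdom (uprod H Bs)) m"
    by (simp add: mrels_def)
qed

text \<open>A relation witnessed decomposable at another arity than m is empty, hence decomposable
  at arity m as well.\<close>
lemma henkin_rels_of_arity:
  assumes "is_ultrafilter H" and "1 \<le> m"
  shows "henkin_rels H Bs \<inter> Pow (mrels (sdom (uprod H Bs)) m)
    = urel H Bs ` Pi UNIV (\<lambda>k. Pow (mrels (sdom (Bs k)) m))"
proof (intro equalityI subsetI)
  fix R
  assume "R \<in> henkin_rels H Bs \<inter> Pow (mrels (sdom (uprod H Bs)) m)"
  then obtain m' Rk where R: "R \<subseteq> mrels (sdom (uprod H Bs)) m" "R \<subseteq> mrels (sdom (uprod H Bs)) m'"
    and Rk: "Rk \<in> Pi UNIV (\<lambda>k. Pow (mrels (sdom (Bs k)) m'))" and eq: "R = urel H Bs Rk"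
    by (auto simp: henkin_rels_def decomposable_def)
  show "R \<in> urel H Bs ` Pi UNIV (\<lambda>k. Pow (mrels (sdom (Bs k)) m))"
  proof (cases "m' = m")
    case True
    with Rk eq show ?thesis
      by blast
  next
    case False
    with R have "R = urel H Bs (\<lambda>k. {})"
      by (auto simp: mrels_def urel_def ultrafilter_empty[OF assms(1)])
    then show ?thesis
      by blast
  qed
next
  fix R
  assume "R \<in> urel H Bs ` Pi UNIV (\<lambda>k. Pow (mrels (sdom (Bs k)) m))"
  with assms show "R \<in> henkin_rels H Bs \<inter> Pow (mrels (sdom (uprod H Bs)) m)"
    unfolding henkin_rels_def decomposable_def using urel_subset_mrels[OF assms(1)] by blast
qed

lemma Bex_Int_Pow_iff: "(\<exists>x\<in>A \<inter> Pow B. P x) \<longleftrightarrow> (\<exists>x\<in>A. x \<subseteq> B \<and> P x)"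
  by blast

lemma Ball_Int_Pow_iff: "(\<forall>x\<in>A \<inter> Pow B. P x) \<longleftrightarrow> (\<forall>x\<in>A. x \<subseteq> B \<longrightarrow> P x)"
  by blast

section \<open>Los's theorem for decomposable-Henkin ultraproducts\<close>

lemma fun_upd_pointwise: "(\<lambda>y. (s(x := g)) y k) = (\<lambda>y. s y k)(x := g k)"
  by auto

lemma fun_upd2_pointwise:
  "(\<lambda>Y n. (Rs(X := (Rs X)(m := R))) Y n k) = (\<lambda>Y n. Rs Y n k)(X := (\<lambda>n. Rs X n k)(m := R k))"
  by (simp add: fun_eq_iff)

lemma hsat_uprod_iff:
  assumes "is_ultrafilter H" and "\<And>k. is_structure far (Bs k)"
  shows "wf_so rar far p \<Longrightarrow> (\<And>x. s x \<in> Pi UNIV (\<lambda>k. sdom (Bs k))) \<Longrightarrow>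
    (\<And>X m. 1 \<le> m \<Longrightarrow> S X m = urel H Bs (Rs X m)) \<Longrightarrow>
    hsat (uprod H Bs) (henkin_rels H Bs) (\<lambda>x. ucls H Bs (s x)) S p \<longleftrightarrow>
    {k. hsat (Bs k) UNIV (\<lambda>x. s x k) (\<lambda>X m. Rs X m k) p} \<in> H"
proof (induction p arbitrary: s S Rs)
  case (Eq t u)
  then show ?case
    by (simp add: tval_uprod[OF assms] ucls_eq_iff[OF assms(1)] tval_in_Pi[OF assms(2)])
next
  case (Rel r ts)
  then show ?case
    by (simp add: srel_uprod_eq_urel map_tval_uprod_in_urel_iff[OF assms])
next
  case (RApp X m ts)
  then show ?case
    by (simp add: map_tval_uprod_in_urel_iff[OF assms])
next
  case (Neg p)
  then show ?case
    by (simp add: Collect_neg_eq ultrafilter_Compl_iff[OF assms(1)])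
next
  case (Conj p q)
  then show ?case
    by (simp add: Collect_conj_eq ultrafilter_Int_iff[OF assms(1)])
next
  case (Disj p q)
  then show ?case
    by (simp add: Collect_disj_eq ultrafilter_Un_iff[OF assms(1)])
next
  case (Impl p q)
  then show ?case
    by (simp add: Collect_imp_eq ultrafilter_Un_iff[OF assms(1)] ultrafilter_Compl_iff[OF assms(1)])
next
  case (Ex x p)
  have "hsat (uprod H Bs) (henkin_rels H Bs) ((\<lambda>y. ucls H Bs (s y))(x := ucls H Bs g)) S p \<longleftrightarrow>
      {k. hsat (Bs k) UNIV ((\<lambda>y. s y k)(x := g k)) (\<lambda>X m. Rs X m k) p} \<in> H"
    if "g \<in> Pi UNIV (\<lambda>k. sdom (Bs k))" for g
    using Ex.IH[of "s(x := g)" S Rs, unfolded fun_upd_pointwise fun_upd_comp[unfolded comp_def]]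
      Ex.prems that by simp
  then show ?case
    unfolding hsat.simps sdom_uprod
    by (rule ultrafilter_Bex_image_Pi_iff[OF assms(1) sdom_nonempty[OF assms(2)]])
next
  case (All x p)
  have "hsat (uprod H Bs) (henkin_rels H Bs) ((\<lambda>y. ucls H Bs (s y))(x := ucls H Bs g)) S p \<longleftrightarrow>
      {k. hsat (Bs k) UNIV ((\<lambda>y. s y k)(x := g k)) (\<lambda>X m. Rs X m k) p} \<in> H"
    if "g \<in> Pi UNIV (\<lambda>k. sdom (Bs k))" for g
    using All.IH[of "s(x := g)" S Rs, unfolded fun_upd_pointwise fun_upd_comp[unfolded comp_def]]
      All.prems that by simp
  then show ?case
    unfolding hsat.simps sdom_uprod
    by (rule ultrafilter_Ball_image_Pi_iff[OF assms(1) sdom_nonempty[OF assms(2)]])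
next
  case (ExR X m p)
  then have m: "1 \<le> m" and wf: "wf_so rar far p"
    by simp_all
  have upd: "(S(X := (S X)(m := urel H Bs R))) Y n = urel H Bs ((Rs(X := (Rs X)(m := R))) Y n)"
    if "1 \<le> n" for R Y n
    using ExR.prems(3) that by simp
  have "hsat (uprod H Bs) (henkin_rels H Bs) (\<lambda>x. ucls H Bs (s x)) (S(X := (S X)(m := urel H Bs R))) p
      \<longleftrightarrow> {k. hsat (Bs k) UNIV (\<lambda>x. s x k) ((\<lambda>Y n. Rs Y n k)(X := (\<lambda>n. Rs X n k)(m := R k))) p} \<in> H"
    for R
    using ExR.IH[of s "S(X := (S X)(m := urel H Bs R))" "Rs(X := (Rs X)(m := R))",
        OF wf ExR.prems(2) upd, unfolded fun_upd2_pointwise] .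
  then show ?case
    unfolding hsat.simps Bex_Int_Pow_iff[symmetric] henkin_rels_of_arity[OF assms(1) m] Int_UNIV_left
    by (rule ultrafilter_Bex_image_Pi_iff[OF assms(1) Pow_not_empty])
next
  case (AllR X m p)
  then have m: "1 \<le> m" and wf: "wf_so rar far p"
    by simp_all
  have upd: "(S(X := (S X)(m := urel H Bs R))) Y n = urel H Bs ((Rs(X := (Rs X)(m := R))) Y n)"
    if "1 \<le> n" for R Y n
    using AllR.prems(3) that by simp
  have "hsat (uprod H Bs) (henkin_rels H Bs) (\<lambda>x. ucls H Bs (s x)) (S(X := (S X)(m := urel H Bs R))) p
      \<longleftrightarrow> {k. hsat (Bs k) UNIV (\<lambda>x. s x k) ((\<lambda>Y n. Rs Y n k)(X := (\<lambda>n. Rs X n k)(m := R k))) p} \<in> H"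
    for R
    using AllR.IH[of s "S(X := (S X)(m := urel H Bs R))" "Rs(X := (Rs X)(m := R))",
        OF wf AllR.prems(2) upd, unfolded fun_upd2_pointwise] .
  then show ?case
    unfolding hsat.simps Ball_Int_Pow_iff[symmetric] henkin_rels_of_arity[OF assms(1) m] Int_UNIV_left
    by (rule ultrafilter_Ball_image_Pi_iff[OF assms(1) Pow_not_empty])
qed

text \<open>A pair (s, Rs) of this type encodes one full second-order assignment
  (\<lambda>x. s x k, \<lambda>X m. Rs X m k) into every factor Bs k.\<close>
type_synonym ('k, 'a) factor_assignment = "(nat \<Rightarrow> 'k \<Rightarrow> 'a) \<times> (nat \<Rightarrow> nat \<Rightarrow> 'k \<Rightarrow> 'a list set)"

definition factor_assignments ::
    "('k \<Rightarrow> ('r, 'f, 'a) struct) \<Rightarrow> ('k, 'a) factor_assignment set" where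
  "factor_assignments Bs = {(s, Rs). (\<forall>x. s x \<in> Pi UNIV (\<lambda>k. sdom (Bs k))) \<and>
     (\<forall>X m. 1 \<le> m \<longrightarrow> Rs X m \<in> Pi UNIV (\<lambda>k. Pow (mrels (sdom (Bs k)) m)))}"

definition factor_sat ::
    "('k \<Rightarrow> ('r, 'f, 'a) struct) \<Rightarrow> ('r, 'f) sof \<Rightarrow> ('k, 'a) factor_assignment \<Rightarrow> 'k set" where
  "factor_sat Bs p = (\<lambda>(s, Rs). {k. hsat (Bs k) UNIV (\<lambda>x. s x k) (\<lambda>X m. Rs X m k) p})"

lemma factor_assignments_nonempty:
  assumes "\<And>k. is_structure far (Bs k)"
  shows "factor_assignments Bs \<noteq> {}"
proof -
  have "Pi UNIV (\<lambda>k. sdom (Bs k)) \<noteq> {}"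
    using sdom_nonempty[OF assms] by simp
  then obtain g where "g \<in> Pi UNIV (\<lambda>k. sdom (Bs k))"
    by blast
  then have "(\<lambda>x. g, \<lambda>X m k. {}) \<in> factor_assignments Bs"
    by (simp add: factor_assignments_def)
  then show ?thesis
    by blast
qed

lemma hmodels_uprod_iff:
  fixes Bs :: "'k \<Rightarrow> ('r, 'f, 'a) struct"
  assumes "is_ultrafilter H" and "\<And>k. is_structure far (Bs k)" and "wf_so rar far p"
  shows "hmodels (uprod H Bs) (henkin_rels H Bs) p \<longleftrightarrow>
    (\<forall>\<sigma>\<in>factor_assignments Bs. factor_sat Bs p \<sigma> \<in> H)"
proof
  assume models: "hmodels (uprod H Bs) (henkin_rels H Bs) p"
  show "\<forall>\<sigma>\<in>factor_assignments Bs. factor_sat Bs p \<sigma> \<in> H"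
  proof (clarify)
    fix s Rs
    assume "(s, Rs) \<in> factor_assignments Bs"
    then have s: "\<And>x. s x \<in> Pi UNIV (\<lambda>k. sdom (Bs k))"
      and Rs: "\<And>X m. 1 \<le> m \<Longrightarrow> Rs X m \<in> Pi UNIV (\<lambda>k. Pow (mrels (sdom (Bs k)) m))"
      by (simp_all add: factor_assignments_def)
    have "urel H Bs (Rs X m) \<in> henkin_rels H Bs \<inter> Pow (mrels (sdom (uprod H Bs)) m)"
      if "1 \<le> m" for X m
      using Rs[OF that] by (simp add: henkin_rels_of_arity[OF assms(1) that])
    with s models
    have "hsat (uprod H Bs) (henkin_rels H Bs) (\<lambda>x. ucls H Bs (s x)) (\<lambda>X m. urel H Bs (Rs X m)) p"
      by (auto simp: hmodels_def sdom_uprod)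
    then show "factor_sat Bs p (s, Rs) \<in> H"
      by (simp add: factor_sat_def hsat_uprod_iff[OF assms(1,2,3) s])
  qed
next
  assume all: "\<forall>\<sigma>\<in>factor_assignments Bs. factor_sat Bs p \<sigma> \<in> H"
  show "hmodels (uprod H Bs) (henkin_rels H Bs) p"
    unfolding hmodels_def
  proof (intro allI impI)
    fix s1 :: "nat \<Rightarrow> ('k \<Rightarrow> 'a) set" and S :: "nat \<Rightarrow> nat \<Rightarrow> ('k \<Rightarrow> 'a) set list set"
    assume "\<forall>x. s1 x \<in> sdom (uprod H Bs)"
    then have "\<exists>g. g \<in> Pi UNIV (\<lambda>k. sdom (Bs k)) \<and> s1 x = ucls H Bs g" for x
      unfolding sdom_uprod by blast
    then obtain s where s: "\<And>x. s x \<in> Pi UNIV (\<lambda>k. sdom (Bs k))"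
      and "\<And>x. s1 x = ucls H Bs (s x)"
      by metis
    then have s1: "s1 = (\<lambda>x. ucls H Bs (s x))"
      by blast
    assume "\<forall>X m. 1 \<le> m \<longrightarrow> S X m \<in> henkin_rels H Bs \<and> S X m \<subseteq> mrels (sdom (uprod H Bs)) m"
    then have "S X m \<in> urel H Bs ` Pi UNIV (\<lambda>k. Pow (mrels (sdom (Bs k)) m))" if "1 \<le> m" for X m
      using that by (simp add: henkin_rels_of_arity[OF assms(1), symmetric])
    then have "\<forall>X m. \<exists>R. 1 \<le> m \<longrightarrow>
        R \<in> Pi UNIV (\<lambda>k. Pow (mrels (sdom (Bs k)) m)) \<and> S X m = urel H Bs R"
      by blast
    then obtain Rs where Rs: "\<And>X m. 1 \<le> m \<Longrightarrow> Rs X m \<in> Pi UNIV (\<lambda>k. Pow (mrels (sdom (Bs k)) m))"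
      and S: "\<And>X m. 1 \<le> m \<Longrightarrow> S X m = urel H Bs (Rs X m)"
      by metis
    have "(s, Rs) \<in> factor_assignments Bs"
      using s Rs by (simp add: factor_assignments_def)
    with all have "factor_sat Bs p (s, Rs) \<in> H"
      by blast
    then show "hsat (uprod H Bs) (henkin_rels H Bs) s1 S p"
      unfolding s1 by (simp add: factor_sat_def hsat_uprod_iff[OF assms s S])
  qed
qed

section \<open>Iterated ultraproducts\<close>

lemma prod_uf_ultrafilter:
  assumes F: "is_ultrafilter F" and G: "is_ultrafilter G"
  shows "is_ultrafilter (prod_uf F G)"
  unfolding is_ultrafilter_def
proof (intro conjI allI impI)
  show "UNIV \<in> prod_uf F G" and "{} \<notin> prod_uf F G"
    using F G by (simp_all add: prod_uf_def ultrafilter_UNIV ultrafilter_empty)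
next
  fix X Y :: "('a \<times> 'b) set"
  assume "X \<in> prod_uf F G \<and> X \<subseteq> Y"
  then show "Y \<in> prod_uf F G"
    unfolding prod_uf_def
    by (auto elim!: ultrafilter_mono[OF G] intro: ultrafilter_mono[OF F])
next
  fix X Y :: "('a \<times> 'b) set"
  assume "X \<in> prod_uf F G \<and> Y \<in> prod_uf F G"
  then show "X \<inter> Y \<in> prod_uf F G"
    by (simp add: prod_uf_def Collect_conj_eq ultrafilter_Int_iff[OF F] ultrafilter_Int_iff[OF G])
next
  fix X :: "('a \<times> 'b) set"
  have "{i. (i, j) \<in> - X} \<in> F \<longleftrightarrow> {i. (i, j) \<in> X} \<notin> F" for j
    using ultrafilter_Compl_iff[OF F, of "{i. (i, j) \<in> X}"] by (simp add: Collect_neg_eq)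
  then have "{j. {i. (i, j) \<in> - X} \<in> F} = - {j. {i. (i, j) \<in> X} \<in> F}"
    by blast
  then show "X \<in> prod_uf F G \<or> - X \<in> prod_uf F G"
    by (simp add: prod_uf_def ultrafilter_Compl_iff[OF G])
qed

definition uncurry_assignments ::
    "('j \<Rightarrow> ('i, 'a) factor_assignment) \<Rightarrow> ('i \<times> 'j, 'a) factor_assignment" where
  "uncurry_assignments \<tau> = (\<lambda>x (i, j). fst (\<tau> j) x i, \<lambda>X m (i, j). snd (\<tau> j) X m i)"

lemma factor_assignments_prod:
  "factor_assignments (\<lambda>(i, j). A i j)
    = uncurry_assignments ` Pi UNIV (\<lambda>j. factor_assignments (\<lambda>i. A i j))"
proof (intro equalityI subsetI)
  fix \<sigma>
  assume \<sigma>_in: "\<sigma> \<in> factor_assignments (\<lambda>(i, j). A i j)"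
  obtain s Rs where \<sigma>: "\<sigma> = (s, Rs)"
    by fastforce
  define \<tau> where "\<tau> j = (\<lambda>x i. s x (i, j), \<lambda>X m i. Rs X m (i, j))" for j
  have "\<tau> \<in> Pi UNIV (\<lambda>j. factor_assignments (\<lambda>i. A i j))"
    using \<sigma>_in by (simp add: \<sigma> factor_assignments_def \<tau>_def Pi_iff)
  moreover have "\<sigma> = uncurry_assignments \<tau>"
    by (simp add: \<sigma> uncurry_assignments_def \<tau>_def)
  ultimately show "\<sigma> \<in> uncurry_assignments ` Pi UNIV (\<lambda>j. factor_assignments (\<lambda>i. A i j))"
    by blast
next
  fix \<sigma>
  assume "\<sigma> \<in> uncurry_assignments ` Pi UNIV (\<lambda>j. factor_assignments (\<lambda>i. A i j))"
  then show "\<sigma> \<in> factor_assignments (\<lambda>(i, j). A i j)"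
    by (fastforce simp: factor_assignments_def uncurry_assignments_def Pi_iff mem_Times_iff)
qed

lemma factor_sat_uncurry_in_prod_uf:
  "factor_sat (\<lambda>(i, j). A i j) p (uncurry_assignments \<tau>) \<in> prod_uf F G \<longleftrightarrow>
    {j. factor_sat (\<lambda>i. A i j) p (\<tau> j) \<in> F} \<in> G"
  by (simp add: factor_sat_def uncurry_assignments_def prod_uf_def case_prod_beta)

theorem lemma2p16:
  fixes rar :: "'r \<Rightarrow> nat" and far :: "'f \<Rightarrow> nat"
    and F :: "'i set set" and G :: "'j set set"
    and A :: "'i \<Rightarrow> 'j \<Rightarrow> ('r, 'f, 'a) struct"
    and phi :: "('r, 'f) sof"
  assumes "is_ultrafilter F" and "is_ultrafilter G"
    and "\<And>i j. is_structure far (A i j)"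
    and "wf_so rar far phi"
  shows "{j. hmodels (uprod F (\<lambda>i. A i j)) (henkin_rels F (\<lambda>i. A i j)) phi} \<in> G
     \<longleftrightarrow> hmodels (uprod (prod_uf F G) (\<lambda>(i, j). A i j))
                 (henkin_rels (prod_uf F G) (\<lambda>(i, j). A i j)) phi"
proof -
  have columns: "hmodels (uprod F (\<lambda>i. A i j)) (henkin_rels F (\<lambda>i. A i j)) phi \<longleftrightarrow>
      (\<forall>\<sigma>\<in>factor_assignments (\<lambda>i. A i j). factor_sat (\<lambda>i. A i j) phi \<sigma> \<in> F)" for j
    by (rule hmodels_uprod_iff[OF assms(1) assms(3) assms(4)])
  have product: "hmodels (uprod (prod_uf F G) (\<lambda>(i, j). A i j))
        (henkin_rels (prod_uf F G) (\<lambda>(i, j). A i j)) phi \<longleftrightarrow>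
      (\<forall>\<sigma>\<in>factor_assignments (\<lambda>(i, j). A i j). factor_sat (\<lambda>(i, j). A i j) phi \<sigma> \<in> prod_uf F G)"
    by (rule hmodels_uprod_iff[OF prod_uf_ultrafilter[OF assms(1,2)] _ assms(4)])
      (simp add: assms(3) split: prod.split)
  have "{j. hmodels (uprod F (\<lambda>i. A i j)) (henkin_rels F (\<lambda>i. A i j)) phi} \<in> G \<longleftrightarrow>
      (\<forall>\<tau>\<in>Pi UNIV (\<lambda>j. factor_assignments (\<lambda>i. A i j)).
        {j. factor_sat (\<lambda>i. A i j) phi (\<tau> j) \<in> F} \<in> G)"
    unfolding columns
    by (rule ultrafilter_Collect_Ball_iff[OF assms(2) factor_assignments_nonempty[OF assms(3)]])
  also have "\<dots> \<longleftrightarrow>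
      (\<forall>\<sigma>\<in>factor_assignments (\<lambda>(i, j). A i j). factor_sat (\<lambda>(i, j). A i j) phi \<sigma> \<in> prod_uf F G)"
    by (simp add: factor_assignments_prod factor_sat_uncurry_in_prod_uf)
  finally show ?thesis
    by (simp only: product)
qed

end
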